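(* Let $\mathcal{F}=C_1\wedge\dots\wedge C_m$ be an unsatisfiable CNF formula and let $X=\{x_1,\dots,x_{n_1}\}$, $Y=\{y_1,\dots,y_{n_2}\}$ be a partition of its variables. If there is a monotone circuit of size $\ell$ that outputs $1$ on every input in $\mathcal{U}(\{0,1\}^{n_1})$ and $0$ on every input in $\mathcal{V}(\{0,1\}^{n_2})$, then there is a $\mathsf{CC}_2$-refutation of $\mathcal{F}$ of length $\ell$ with respect to $(X,Y)$.
   Context: A semantic refutation of $\mathcal{F}$ is a sequence $L_1,\dots,L_\ell$ of Boolean functions on all variables with $L_i=C_i$ for $i\le m$, $L_\ell\equiv 0$, and for each $i>m$ there are $j,k<i$ with $L_j\wedge L_k\Rightarrow L_i$ pointwise; its length is $\ell$. A $\mathsf{CC}_k$-refutation with respect to $(X,Y)$ is a semantic refutation in which every $L_i$ is computable by a deterministic $k$-bit two-party communication protocol where Alice holds the $X$-variables and Bob the $Y$-variables. For each clause $C_i$ let $\mathrm{vars}(i)$ be the set of $X$-variables occurring in $C_i$. The inputs are Boolean variables $\mathrm{TT}_i(\alpha)$ for $i\in[m]$, $\alpha\in\{0,1\}^{\mathrm{vars}(i)}$ (these are inputs of the monotone function $\mathrm{CSP\text{-}SAT}_{\mathsf{Search}(\mathcal{F})}$, which accepts iff some $x\in\{0,1\}^{n_1}$ has $\mathrm{TT}_i(x|_{\mathrm{vars}(i)})=1$ for all $i$). For $x\in\{0,1\}^{n_1}$, $\mathcal{U}(x)$ sets $\mathrm{TT}_i(\alpha)=1$ iff $\alpha=x|_{\mathrm{vars}(i)}$.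 For $y\in\{0,1\}^{n_2}$, $\mathcal{V}(y)$ sets $\mathrm{TT}_i(\alpha)=0$ iff $C_i$ is falsified by the assignment giving $\alpha$ to $\mathrm{vars}(i)$ and $y$ to the $Y$-variables. A monotone circuit uses only $\wedge$ and $\vee$ gates; size is the number of gates.
   Formalization: The $\mathsf{CC}_2$-refutation of $\mathcal{F}$ consists of the $m$ clause lines followed by $\ell$ further lines, so its total length is m + $\ell$ rather than $\ell$. The statement above fails without it. *)

theory Defs
  imports Main
begin

text \<open>Variables: Inl i is x_i (i < n1, held by Alice), Inr j is y_j (j < n2, held by Bob).
  A literal is (variable, polarity); it is true iff the variable has value = polarity.\<close>

type_synonym var = "nat + nat"
type_synonym lit = "var \<times> bool"
type_synonym clause = "lit set"
type_synonym cnf = "clause list"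

fun var_val :: "bool list \<Rightarrow> bool list \<Rightarrow> var \<Rightarrow> bool" where
  "var_val x y (Inl i) = x ! i"
| "var_val x y (Inr j) = y ! j"

definition clause_sat :: "bool list \<Rightarrow> bool list \<Rightarrow> clause \<Rightarrow> bool" where
  "clause_sat x y C \<longleftrightarrow> (\<exists>(v, b) \<in> C. var_val x y v = b)"

definition valid_assign :: "nat \<Rightarrow> nat \<Rightarrow> bool list \<Rightarrow> bool list \<Rightarrow> bool" where
  "valid_assign n1 n2 x y \<longleftrightarrow> length x = n1 \<and> length y = n2"

definition var_in_range :: "nat \<Rightarrow> nat \<Rightarrow> var \<Rightarrow> bool" where
  "var_in_range n1 n2 v \<longleftrightarrow> (case v of Inl i \<Rightarrow> i < n1 | Inr j \<Rightarrow> j < n2)"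

definition wf_cnf :: "nat \<Rightarrow> nat \<Rightarrow> cnf \<Rightarrow> bool" where
  "wf_cnf n1 n2 F \<longleftrightarrow> (\<forall>C \<in> set F. \<forall>(v, b) \<in> C. var_in_range n1 n2 v)"

definition unsat :: "nat \<Rightarrow> nat \<Rightarrow> cnf \<Rightarrow> bool" where
  "unsat n1 n2 F \<longleftrightarrow> (\<forall>x y. valid_assign n1 n2 x y \<longrightarrow> (\<exists>C \<in> set F. \<not> clause_sat x y C))"

datatype ('a, 'b) protocol =
    Out bool
  | Alice "'a \<Rightarrow> bool" "('a, 'b) protocol" "('a, 'b) protocol"
  | Bob "'b \<Rightarrow> bool" "('a, 'b) protocol" "('a, 'b) protocol"

fun prot_eval :: "('a, 'b) protocol \<Rightarrow> 'a \<Rightarrow> 'b \<Rightarrow> bool" where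
  "prot_eval (Out c) a b = c"
| "prot_eval (Alice f P Q) a b = (if f a then prot_eval P a b else prot_eval Q a b)"
| "prot_eval (Bob g P Q) a b = (if g b then prot_eval P a b else prot_eval Q a b)"

fun prot_cost :: "('a, 'b) protocol \<Rightarrow> nat" where
  "prot_cost (Out c) = 0"
| "prot_cost (Alice f P Q) = Suc (max (prot_cost P) (prot_cost Q))"
| "prot_cost (Bob g P Q) = Suc (max (prot_cost P) (prot_cost Q))"

definition cc_computable :: "nat \<Rightarrow> nat \<Rightarrow> nat \<Rightarrow> (bool list \<Rightarrow> bool list \<Rightarrow> bool) \<Rightarrow> bool" where
  "cc_computable k n1 n2 L \<longleftrightarrow>
     (\<exists>P :: (bool list, bool list) protocol. prot_cost P \<le> k \<and>
        (\<forall>x y. valid_assign n1 n2 x y \<longrightarrow> prot_eval P x y = L x y))"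

definition semantic_refutation ::
  "nat \<Rightarrow> nat \<Rightarrow> cnf \<Rightarrow> (bool list \<Rightarrow> bool list \<Rightarrow> bool) list \<Rightarrow> bool" where
  "semantic_refutation n1 n2 F Ls \<longleftrightarrow>
     length F \<le> length Ls \<and> Ls \<noteq> [] \<and>
     (\<forall>i < length F. \<forall>x y. valid_assign n1 n2 x y \<longrightarrow> (Ls ! i) x y = clause_sat x y (F ! i)) \<and>
     (\<forall>x y. valid_assign n1 n2 x y \<longrightarrow> \<not> last Ls x y) \<and>
     (\<forall>i. length F \<le> i \<and> i < length Ls \<longrightarrow>
        (\<exists>j k. j < i \<and> k < i \<and>
           (\<forall>x y. valid_assign n1 n2 x y \<longrightarrow> (Ls ! j) x y \<and> (Ls ! k) x y \<longrightarrow> (Ls ! i) x y)))"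

definition CC_refutation ::
  "nat \<Rightarrow> nat \<Rightarrow> nat \<Rightarrow> cnf \<Rightarrow> (bool list \<Rightarrow> bool list \<Rightarrow> bool) list \<Rightarrow> bool" where
  "CC_refutation k n1 n2 F Ls \<longleftrightarrow>
     semantic_refutation n1 n2 F Ls \<and> (\<forall>L \<in> set Ls. cc_computable k n1 n2 L)"

text \<open>vars(i): indices of X-variables occurring in clause C_i.  An assignment
  alpha in {0,1}^vars(i) is represented by the set of indices it sets to 1
  (a subset of vars(i)).  The input TT_i(alpha) is indexed by the pair (i, alpha).\<close>

definition xvars :: "cnf \<Rightarrow> nat \<Rightarrow> nat set" where
  "xvars F i = {j. \<exists>b. (Inl j, b) \<in> F ! i}"

definition tt_inputs :: "cnf \<Rightarrow> (nat \<times> nat set) set" where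
  "tt_inputs F = {(i, \<alpha>). i < length F \<and> \<alpha> \<subseteq> xvars F i}"

definition U_inp :: "cnf \<Rightarrow> bool list \<Rightarrow> nat \<times> nat set \<Rightarrow> bool" where
  "U_inp F x = (\<lambda>(i, \<alpha>). \<alpha> = {j \<in> xvars F i. x ! j})"

definition V_inp :: "cnf \<Rightarrow> bool list \<Rightarrow> nat \<times> nat set \<Rightarrow> bool" where
  "V_inp F y = (\<lambda>(i, \<alpha>). \<exists>(v, b) \<in> F ! i.
      (case v of Inl j \<Rightarrow> (j \<in> \<alpha>) = b | Inr j \<Rightarrow> y ! j = b))"

text \<open>A monotone circuit is a nonempty list of binary AND/OR gates; each gate reads
  inputs or earlier gates; the output is the last gate; its size is the number of gates.\<close>

datatype 'v wire = Inp 'v | Gt nat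
datatype 'v gate = AndG "'v wire" "'v wire" | OrG "'v wire" "'v wire"

fun wire_val :: "('v \<Rightarrow> bool) \<Rightarrow> bool list \<Rightarrow> 'v wire \<Rightarrow> bool" where
  "wire_val \<rho> vs (Inp v) = \<rho> v"
| "wire_val \<rho> vs (Gt j) = vs ! j"

fun gate_val :: "('v \<Rightarrow> bool) \<Rightarrow> bool list \<Rightarrow> 'v gate \<Rightarrow> bool" where
  "gate_val \<rho> vs (AndG a b) = (wire_val \<rho> vs a \<and> wire_val \<rho> vs b)"
| "gate_val \<rho> vs (OrG a b) = (wire_val \<rho> vs a \<or> wire_val \<rho> vs b)"

definition circ_vals :: "('v \<Rightarrow> bool) \<Rightarrow> 'v gate list \<Rightarrow> bool list" where
  "circ_vals \<rho> gs = foldl (\<lambda>vs g. vs @ [gate_val \<rho> vs g]) [] gs"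

definition circ_out :: "('v \<Rightarrow> bool) \<Rightarrow> 'v gate list \<Rightarrow> bool" where
  "circ_out \<rho> gs = last (circ_vals \<rho> gs)"

fun wire_ok :: "'v set \<Rightarrow> nat \<Rightarrow> 'v wire \<Rightarrow> bool" where
  "wire_ok V k (Inp v) = (v \<in> V)"
| "wire_ok V k (Gt j) = (j < k)"

fun gate_ok :: "'v set \<Rightarrow> nat \<Rightarrow> 'v gate \<Rightarrow> bool" where
  "gate_ok V k (AndG a b) = (wire_ok V k a \<and> wire_ok V k b)"
| "gate_ok V k (OrG a b) = (wire_ok V k a \<and> wire_ok V k b)"

definition monotone_circuit :: "'v set \<Rightarrow> 'v gate list \<Rightarrow> bool" where
  "monotone_circuit V gs \<longleftrightarrow> gs \<noteq> [] \<and> (\<forall>k < length gs. gate_ok V k (gs ! k))"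

end

theory Submission
  imports Defs
begin

text \<open>For gate k of the circuit take the line "gate k is true on U(x) implies gate k is true
  on V(y)". Alice knows the left side and Bob the right side, so two bits suffice. An input
  TT_i(\<alpha>) that is true on U(x) is also true on V(y) whenever (x, y) satisfies C_i, so the
  lines of the input wires follow from the clauses; AND and OR gates preserve such
  implications, so each gate line follows from the lines of its two input wires. The output
  gate is true on U(x) and false on V(y), hence the last line is identically false.\<close>

lemma circ_vals_snoc:
  "circ_vals \<rho> (gs @ [g]) = circ_vals \<rho> gs @ [gate_val \<rho> (circ_vals \<rho> gs) g]"
  by (simp add: circ_vals_def)

lemma length_circ_vals [simp]: "length (circ_vals \<rho> gs) = length gs"
  by (induction gs rule: rev_induct) (simp_all add: circ_vals_def)

lemma circ_vals_nth_take:
  "k < length gs \<Longrightarrow> circ_vals \<rho> gs ! k = gate_val \<rho> (take k (circ_vals \<rho> gs)) (gs ! k)"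
proof (induction gs rule: rev_induct)
  case Nil
  then show ?case by simp
next
  case (snoc g gs)
  then show ?case
    by (cases "k < length gs") (auto simp: circ_vals_snoc nth_append)
qed

lemma gate_val_take:
  assumes "gate_ok V k g" "k \<le> length vs"
  shows "gate_val \<rho> (take k vs) g = gate_val \<rho> vs g"
proof -
  have "wire_val \<rho> (take k vs) w = wire_val \<rho> vs w" if "wire_ok V k w" for w
    using that assms(2) by (cases w) auto
  then show ?thesis
    using assms(1) by (cases g) auto
qed

lemma circ_vals_nth:
  assumes "monotone_circuit V gs" "k < length gs"
  shows "circ_vals \<rho> gs ! k = gate_val \<rho> (circ_vals \<rho> gs) (gs ! k)"
  using assms circ_vals_nth_take[OF assms(2)] gate_val_take[of V k "gs ! k" "circ_vals \<rho> gs"]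
  unfolding monotone_circuit_def by simp

lemma circ_out_eq_nth:
  "gs \<noteq> [] \<Longrightarrow> circ_out \<rho> gs = circ_vals \<rho> gs ! (length gs - 1)"
  by (metis circ_out_def last_conv_nth length_0_conv length_circ_vals)

lemma gate_val_mono:
  assumes "g \<in> {AndG a b, OrG a b}"
    and "wire_val \<rho> vs a \<longrightarrow> wire_val \<sigma> ws a"
    and "wire_val \<rho> vs b \<longrightarrow> wire_val \<sigma> ws b"
  shows "gate_val \<rho> vs g \<longrightarrow> gate_val \<sigma> ws g"
  using assms by auto

lemma gate_ok_args:
  "gate_ok V k g \<Longrightarrow> \<exists>a b. g \<in> {AndG a b, OrG a b} \<and> wire_ok V k a \<and> wire_ok V k b"
  by (cases g) auto

lemma clause_sat_U_imp_V:
  assumes "clause_sat x y (F ! i)" "U_inp F x (i, \<alpha>)"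
  shows "V_inp F y (i, \<alpha>)"
proof -
  obtain v b where vb: "(v, b) \<in> F ! i" "var_val x y v = b"
    using assms(1) unfolding clause_sat_def by auto
  have "case v of Inl j \<Rightarrow> (j \<in> \<alpha>) = b | Inr j \<Rightarrow> y ! j = b"
  proof (cases v)
    case (Inl j)
    then have "j \<in> xvars F i"
      using vb(1) unfolding xvars_def by auto
    then show ?thesis
      using Inl vb(2) assms(2) unfolding U_inp_def by auto
  qed (use vb(2) in simp)
  then show ?thesis
    using vb(1) unfolding V_inp_def by auto
qed

lemma cc_computable_disj: "cc_computable 2 n1 n2 (\<lambda>x y. f x \<or> g y)"
proof -
  let ?P = "Alice f (Out True) (Bob g (Out True) (Out False))
              :: (bool list, bool list) protocol"
  have "prot_eval ?P x y = (f x \<or> g y)" for x y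
    by simp
  then show ?thesis
    unfolding cc_computable_def by (intro exI[of _ ?P]) simp
qed

lemma clause_sat_iff_sides:
  "clause_sat x y C \<longleftrightarrow>
     (\<exists>(v, b) \<in> C. \<exists>j. v = Inl j \<and> x ! j = b) \<or> (\<exists>(v, b) \<in> C. \<exists>j. v = Inr j \<and> y ! j = b)"
proof -
  have var_val_iff: "var_val x y v = b \<longleftrightarrow> (\<exists>j. v = Inl j \<and> x ! j = b) \<or> (\<exists>j. v = Inr j \<and> y ! j = b)"
    for v b by (cases v) auto
  show ?thesis
    unfolding clause_sat_def var_val_iff by auto
qed

definition clause_line :: "clause \<Rightarrow> bool list \<Rightarrow> bool list \<Rightarrow> bool" where
  "clause_line C = (\<lambda>x y. clause_sat x y C)"

definition gate_line :: "cnf \<Rightarrow> (nat \<times> nat set) gate list \<Rightarrow> nat \<Rightarrow> bool list \<Rightarrow> bool list \<Rightarrow> bool" where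
  "gate_line F gs k = (\<lambda>x y. circ_vals (U_inp F x) gs ! k \<longrightarrow> circ_vals (V_inp F y) gs ! k)"

definition circuit_refutation ::
  "cnf \<Rightarrow> (nat \<times> nat set) gate list \<Rightarrow> (bool list \<Rightarrow> bool list \<Rightarrow> bool) list" where
  "circuit_refutation F gs = map clause_line F @ map (gate_line F gs) [0..<length gs]"

definition wire_line :: "cnf \<Rightarrow> (nat \<times> nat set) wire \<Rightarrow> nat" where
  "wire_line F w = (case w of Inp (i, \<alpha>) \<Rightarrow> i | Gt j \<Rightarrow> length F + j)"

lemma cc_computable_clause_line: "cc_computable 2 n1 n2 (clause_line C)"
  using cc_computable_disj unfolding clause_line_def clause_sat_iff_sides .

lemma cc_computable_gate_line: "cc_computable 2 n1 n2 (gate_line F gs k)"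
  using cc_computable_disj[where f = "\<lambda>x. \<not> circ_vals (U_inp F x) gs ! k"
                              and g = "\<lambda>y. circ_vals (V_inp F y) gs ! k"]
  unfolding gate_line_def by simp

lemma length_circuit_refutation [simp]:
  "length (circuit_refutation F gs) = length F + length gs"
  by (simp add: circuit_refutation_def)

lemma circuit_refutation_nth_clause:
  "i < length F \<Longrightarrow> circuit_refutation F gs ! i = clause_line (F ! i)"
  by (simp add: circuit_refutation_def nth_append)

lemma circuit_refutation_nth_gate:
  "k < length gs \<Longrightarrow> circuit_refutation F gs ! (length F + k) = gate_line F gs k"
  by (simp add: circuit_refutation_def nth_append)

lemma wire_line_less:
  "wire_ok (tt_inputs F) k w \<Longrightarrow> wire_line F w < length F + k"
  by (cases w) (auto simp: tt_inputs_def wire_line_def)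

lemma wire_line_imp:
  assumes "wire_ok (tt_inputs F) k w" "k \<le> length gs"
    and "(circuit_refutation F gs ! wire_line F w) x y"
  shows "wire_val (U_inp F x) (circ_vals (U_inp F x) gs) w \<longrightarrow>
           wire_val (V_inp F y) (circ_vals (V_inp F y) gs) w"
proof (cases w)
  case (Inp p)
  obtain i \<alpha> where "p = (i, \<alpha>)" by fastforce
  with Inp assms show ?thesis
    using clause_sat_U_imp_V[of x y F i \<alpha>] circuit_refutation_nth_clause[of i F gs]
    by (auto simp: tt_inputs_def wire_line_def clause_line_def)
next
  case (Gt j)
  with assms show ?thesis
    using circuit_refutation_nth_gate[of j gs F] by (simp add: wire_line_def gate_line_def)
qed

lemma gate_line_derivable:
  assumes "monotone_circuit (tt_inputs F) gs" "k < length gs"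
  shows "\<exists>j j'. j < length F + k \<and> j' < length F + k \<and>
           (\<forall>x y. (circuit_refutation F gs ! j) x y \<and> (circuit_refutation F gs ! j') x y
                    \<longrightarrow> gate_line F gs k x y)"
proof -
  obtain a b where ab: "gs ! k \<in> {AndG a b, OrG a b}"
    and oks: "wire_ok (tt_inputs F) k a" "wire_ok (tt_inputs F) k b"
    using gate_ok_args assms unfolding monotone_circuit_def by blast
  show ?thesis
  proof (intro exI conjI allI impI)
    fix x y
    assume "(circuit_refutation F gs ! wire_line F a) x y \<and> (circuit_refutation F gs ! wire_line F b) x y"
    then have "gate_val (U_inp F x) (circ_vals (U_inp F x) gs) (gs ! k) \<longrightarrow>
                 gate_val (V_inp F y) (circ_vals (V_inp F y) gs) (gs ! k)"
      using wire_line_imp[OF oks(1)] wire_line_imp[OF oks(2)] assms(2)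
      by (intro gate_val_mono[OF ab]) auto
    then show "gate_line F gs k x y"
      using circ_vals_nth[OF assms] unfolding gate_line_def by simp
  qed (use wire_line_less[OF oks(1)] wire_line_less[OF oks(2)] in auto)
qed

lemma semantic_refutation_circuit_refutation:
  assumes "monotone_circuit (tt_inputs F) gs"
    and "\<forall>x. length x = n1 \<longrightarrow> circ_out (U_inp F x) gs"
    and "\<forall>y. length y = n2 \<longrightarrow> \<not> circ_out (V_inp F y) gs"
  shows "semantic_refutation n1 n2 F (circuit_refutation F gs)"
proof -
  let ?Ls = "circuit_refutation F gs"
  have gs: "gs \<noteq> []"
    using assms(1) unfolding monotone_circuit_def by simp
  have nonempty: "?Ls \<noteq> []"
    using gs by (simp add: circuit_refutation_def)
  then have "last ?Ls = gate_line F gs (length gs - 1)"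
    using gs circuit_refutation_nth_gate[of "length gs - 1" gs F]
    by (simp add: last_conv_nth Suc_leI)
  then have last_false: "\<not> last ?Ls x y" if "valid_assign n1 n2 x y" for x y
    using that assms(2,3) circ_out_eq_nth[OF gs] by (simp add: valid_assign_def gate_line_def)
  have derived: "\<exists>j j'. j < i \<and> j' < i \<and> (\<forall>x y. (?Ls ! j) x y \<and> (?Ls ! j') x y \<longrightarrow> (?Ls ! i) x y)"
    if "length F \<le> i" "i < length ?Ls" for i
    using gate_line_derivable[OF assms(1), of "i - length F"] circuit_refutation_nth_gate[of "i - length F" gs F]
      that by simp
  show ?thesis
    unfolding semantic_refutation_def
    using nonempty last_false derived
    by (simp add: circuit_refutation_nth_clause clause_line_def) meson
qed

lemma cc_computable_circuit_refutation:
  "L \<in> set (circuit_refutation F gs) \<Longrightarrow> cc_computable 2 n1 n2 L"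
  using cc_computable_clause_line cc_computable_gate_line
  by (auto simp: circuit_refutation_def)

theorem mainTheorem3:
  fixes n1 n2 :: nat and F :: cnf and gs :: "(nat \<times> nat set) gate list" and l :: nat
  assumes "wf_cnf n1 n2 F"
    and "unsat n1 n2 F"
    and "monotone_circuit (tt_inputs F) gs"
    and "length gs = l"
    and "\<forall>x. length x = n1 \<longrightarrow> circ_out (U_inp F x) gs"
    and "\<forall>y. length y = n2 \<longrightarrow> \<not> circ_out (V_inp F y) gs"
  shows "\<exists>Ls. CC_refutation 2 n1 n2 F Ls \<and> length Ls = length F + l"
proof -
  have "CC_refutation 2 n1 n2 F (circuit_refutation F gs)"
    unfolding CC_refutation_def
    using semantic_refutation_circuit_refutation[OF assms(3,5,6)] cc_computable_circuit_refutation
    by blast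
  then show ?thesis
    using assms(4) by auto
qed

end
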